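(* Let $(\mathcal X,\mathcal A,\mu)$ be a measurable space with $\sigma$-finite $\mu$, let $p_1,p_2$ be mutually absolutely continuous probability densities w.r.t. $\mu$, $B=p_1/p_2$, $\rho=\int\sqrt{p_1p_2}\,d\mu$. Fix an even integer $N$. Let $X_1,\dots,X_N$ be i.i.d. with density $p_2$ and $\bar B_N=N^{-1}\sum_{i=1}^N B(X_i)$; set $V_{(1)}=\mathrm{Var}(\bar B_N-1)\in[0,\infty]$. For $n_1+n_2=N$, let $X_{11},\dots,X_{1n_1}$ i.i.d. with density $p_1$ and $X_{21},\dots,X_{2n_2}$ i.i.d. with density $p_2$, all independent, and put $\bar B^{-1/2}_{1n_1}=n_1^{-1}\sum_i B(X_{1i})^{-1/2}$, $\bar B^{1/2}_{2n_2}=n_2^{-1}\sum_i B(X_{2i})^{1/2}$, $V_{(2)}(n_1,n_2)=\mathrm{Var}(\bar B^{1/2}_{2n_2}-\bar B^{-1/2}_{1n_1})$, and $V_{(2)}^{\mathrm{bal}}=V_{(2)}(N/2,N/2)$. Then: (i) for every mutually absolutely continuous pair $(p_1,p_2)$, $V_{(2)}^{\mathrm{bal}}=4(1-\rho^2)/N$, hence $\sup_{(p_1,p_2)\in\mathcal P_{\mathrm{ac}}}V_{(2)}^{\mathrm{bal}}\le 4/N<\infty$; (ii) whenever $\rho\le 1/2$, $V_{(2)}^{\mathrm{bal}}\le V_{(1)}$.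
   Context: Mutual absolute continuity: $p_1(x)=0\iff p_2(x)=0$ for $\mu$-a.e. $x$. $\mathcal P_{\mathrm{ac}}$ denotes the class of all pairs of mutually absolutely continuous probability densities. Variances take values in $[0,\infty]$, equal to $+\infty$ when the second moment is infinite. *)

theory Defs
  imports "HOL-Probability.Probability"
begin

definition prob_density :: "'a measure \<Rightarrow> ('a \<Rightarrow> real) \<Rightarrow> bool" where
  "prob_density M p \<longleftrightarrow> p \<in> borel_measurable M \<and> (\<forall>x\<in>space M. 0 \<le> p x)
     \<and> (\<integral>\<^sup>+ x. ennreal (p x) \<partial>M) = 1"

definition Pac :: "'a measure \<Rightarrow> (('a \<Rightarrow> real) \<times> ('a \<Rightarrow> real)) set" where
  "Pac M = {(p1, p2). prob_density M p1 \<and> prob_density M p2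
             \<and> (AE x in M. p1 x = 0 \<longleftrightarrow> p2 x = 0)}"

definition lik_ratio :: "('a \<Rightarrow> real) \<Rightarrow> ('a \<Rightarrow> real) \<Rightarrow> 'a \<Rightarrow> real" where
  "lik_ratio p1 p2 x = p1 x / p2 x"

definition bhatt :: "'a measure \<Rightarrow> ('a \<Rightarrow> real) \<Rightarrow> ('a \<Rightarrow> real) \<Rightarrow> real" where
  "bhatt M p1 p2 = (\<integral>x. sqrt (p1 x * p2 x) \<partial>M)"

definition ext_variance :: "'b measure \<Rightarrow> ('b \<Rightarrow> real) \<Rightarrow> ennreal" where
  "ext_variance P f = (if integrable P (\<lambda>x. (f x)\<^sup>2)
      then ennreal (prob_space.variance P f) else \<infinity>)"

definition iid_sample :: "'a measure \<Rightarrow> ('a \<Rightarrow> real) \<Rightarrow> nat \<Rightarrow> (nat \<Rightarrow> 'a) measure" where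
  "iid_sample M p n = PiM {..<n} (\<lambda>_. density M (\<lambda>x. ennreal (p x)))"

definition V1 :: "'a measure \<Rightarrow> ('a \<Rightarrow> real) \<Rightarrow> ('a \<Rightarrow> real) \<Rightarrow> nat \<Rightarrow> ennreal" where
  "V1 M p1 p2 N = ext_variance (iid_sample M p2 N)
     (\<lambda>X. (1 / real N) * (\<Sum>i<N. lik_ratio p1 p2 (X i)) - 1)"

definition V2 :: "'a measure \<Rightarrow> ('a \<Rightarrow> real) \<Rightarrow> ('a \<Rightarrow> real) \<Rightarrow> nat \<Rightarrow> nat \<Rightarrow> ennreal" where
  "V2 M p1 p2 n1 n2 = ext_variance (iid_sample M p1 n1 \<Otimes>\<^sub>M iid_sample M p2 n2)
     (\<lambda>(X1, X2). (1 / real n2) * (\<Sum>i<n2. lik_ratio p1 p2 (X2 i) powr (1/2))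
               - (1 / real n1) * (\<Sum>i<n1. lik_ratio p1 p2 (X1 i) powr (-1/2)))"

definition V2_bal :: "'a measure \<Rightarrow> ('a \<Rightarrow> real) \<Rightarrow> ('a \<Rightarrow> real) \<Rightarrow> nat \<Rightarrow> ennreal" where
  "V2_bal M p1 p2 N = V2 M p1 p2 (N div 2) (N div 2)"

end

(* Write B = p1/p2 and rho = int sqrt (p1 p2). Under p2, sqrt B has mean rho and second
   moment E B = 1; under p1, B^(-1/2) is the square root of the reversed ratio p2/p1 and has
   the same two moments. So each sample mean in the balanced two-sample statistic has variance
   (1 - rho^2)/(N/2), and by independence V2_bal = 4 (1 - rho^2)/N <= 4/N.
   On the other hand V1 = Var B / N = (E B^2 - 1)/N. Lyapunov's inequality
   (E B)^3 <= (E sqrt B)^2 E B^2, obtained by integrating the weighted AM-GM inequality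
   3 t B <= 2 sqrt B + t^3 B^2 at t = rho, gives E B^2 >= 1/rho^2, and
   1/rho^2 >= 5 - 4 rho^2 as soon as rho <= 1/2. *)

theory Submission
  imports Defs
begin

lemma mult_sqrt_divide:
  fixes a b :: real
  assumes "0 \<le> a" "0 \<le> b"
  shows "b * sqrt (a / b) = sqrt (a * b)"
  using assms by (cases "b = 0") (simp_all add: real_sqrt_divide real_sqrt_mult field_simps)

lemma powr_neg_half_divide:
  fixes a b :: real
  assumes "0 \<le> a" "0 \<le> b"
  shows "(a / b) powr (-1/2) = sqrt (b / a)"
  using assms by (simp add: powr_minus_divide powr_half_sqrt real_sqrt_divide)

lemma sqrt_le_one_plus:
  fixes x :: real
  shows "0 \<le> x \<Longrightarrow> sqrt x \<le> 1 + x"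
  by (rule real_le_lsqrt) (auto simp: power2_eq_square algebra_simps)

lemma weighted_am_gm:
  fixes s t :: real
  assumes "0 \<le> s" "0 < t"
  shows "3 * t * s\<^sup>2 \<le> 2 * s + t^3 * (s\<^sup>2)\<^sup>2"
proof -
  have "0 \<le> t * s * (t * s - 1)\<^sup>2 * (t * s + 2)"
    using assms by simp
  also have "\<dots> = t * (2 * s + t^3 * (s\<^sup>2)\<^sup>2 - 3 * t * s\<^sup>2)"
    by (simp add: power2_eq_square power3_eq_cube power4_eq_xxxx algebra_simps)
  finally show ?thesis
    using assms by (simp add: zero_le_mult_iff)
qed

lemma four_mult_one_minus_square_le:
  fixes r m :: real
  assumes "1 \<le> r\<^sup>2 * m" "0 \<le> r" "r \<le> 1/2"
  shows "4 * (1 - r\<^sup>2) \<le> m - 1"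
proof -
  have "r\<^sup>2 \<le> 1/4"
    using assms(2,3) power_mono[of r "1/2" 2] by (simp add: power2_eq_square)
  then have "r\<^sup>2 * (5 - 4 * r\<^sup>2) \<le> r\<^sup>2 * m"
    using assms(1) mult_nonneg_nonneg[of "1 - r\<^sup>2" "1 - 4 * r\<^sup>2"] by (simp add: algebra_simps)
  moreover have "0 < r\<^sup>2"
    using assms(1) by (cases "r = 0") auto
  ultimately show ?thesis
    by simp
qed

lemma (in prob_space) integrable_sqrt:
  fixes X :: "'a \<Rightarrow> real"
  assumes "\<And>x. x \<in> space M \<Longrightarrow> 0 \<le> X x" "integrable M X"
  shows "integrable M (\<lambda>x. sqrt (X x))"
proof (rule Bochner_Integration.integrable_bound)
  show "integrable M (\<lambda>x. 1 + X x)"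
    using assms(2) by simp
  show "AE x in M. norm (sqrt (X x)) \<le> norm (1 + X x)"
    using assms(1) by (intro AE_I2) (simp add: sqrt_le_one_plus)
qed (use assms(2) in simp)

lemma (in prob_space) expectation_weighted_am_gm:
  fixes X :: "'a \<Rightarrow> real"
  assumes nonneg: "\<And>x. x \<in> space M \<Longrightarrow> 0 \<le> X x"
    and X: "integrable M X" and X2: "integrable M (\<lambda>x. (X x)\<^sup>2)" and "0 < t"
  shows "3 * t * expectation X \<le> 2 * expectation (\<lambda>x. sqrt (X x)) + t^3 * expectation (\<lambda>x. (X x)\<^sup>2)"
proof -
  note sqrt_X = integrable_sqrt[OF nonneg X]
  have "expectation (\<lambda>x. 3 * t * X x) \<le> expectation (\<lambda>x. 2 * sqrt (X x) + t^3 * (X x)\<^sup>2)"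
  proof (rule integral_mono)
    fix x assume "x \<in> space M"
    then show "3 * t * X x \<le> 2 * sqrt (X x) + t^3 * (X x)\<^sup>2"
      using weighted_am_gm[of "sqrt (X x)" t] nonneg \<open>0 < t\<close> by simp
  qed (use X X2 sqrt_X in auto)
  then show ?thesis
    using X X2 sqrt_X by simp
qed

lemma (in prob_space) expectation_cube_le:
  fixes X :: "'a \<Rightarrow> real"
  assumes nonneg: "\<And>x. x \<in> space M \<Longrightarrow> 0 \<le> X x"
    and X: "integrable M X" and X2: "integrable M (\<lambda>x. (X x)\<^sup>2)"
  shows "(expectation X)^3 \<le> (expectation (\<lambda>x. sqrt (X x)))\<^sup>2 * expectation (\<lambda>x. (X x)\<^sup>2)"
proof -
  define a where "a = expectation X"
  define \<rho> where "\<rho> = expectation (\<lambda>x. sqrt (X x))"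
  define m where "m = expectation (\<lambda>x. (X x)\<^sup>2)"
  have "0 \<le> a" "0 \<le> \<rho>" "0 \<le> m"
    using nonneg by (auto simp: a_def \<rho>_def m_def)
  have "a^3 \<le> \<rho>\<^sup>2 * m"
  proof (cases "a = 0")
    case False
    then have "0 < a"
      using \<open>0 \<le> a\<close> by simp
    have "\<rho> \<noteq> 0"
    proof
      assume "\<rho> = 0"
      then have "AE x in M. sqrt (X x) = 0"
        using integral_nonneg_eq_0_iff_AE[OF integrable_sqrt[OF nonneg X]] nonneg by
          (simp add: \<rho>_def)
      then have "a = expectation (\<lambda>x. 0)"
        unfolding a_def by (intro integral_cong_AE) (use X in auto)
      with \<open>0 < a\<close> show False
        by simp
    qed
    with \<open>0 \<le> \<rho>\<close> have "0 < \<rho>"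
      by simp
    have "3 * \<rho> \<le> 2 * \<rho> + \<rho>^3 * m / a^3"
      using expectation_weighted_am_gm[OF nonneg X X2, of "\<rho> / a", folded a_def \<rho>_def m_def]
        \<open>0 < a\<close> \<open>0 < \<rho>\<close> by (simp add: power_divide)
    then have "\<rho> * a^3 \<le> \<rho> * (\<rho>\<^sup>2 * m)"
      using \<open>0 < a\<close> by (simp add: field_simps power2_eq_square power3_eq_cube)
    then show ?thesis
      using \<open>0 < \<rho>\<close> by simp
  qed (use \<open>0 \<le> m\<close> in simp)
  then show ?thesis
    by (simp add: a_def \<rho>_def m_def)
qed

lemma ext_variance_cong:
  assumes "\<And>x. x \<in> space P \<Longrightarrow> f x = g x"
  shows "ext_variance P f = ext_variance P g"
proof -
  have "integrable P (\<lambda>x. (f x)\<^sup>2) \<longleftrightarrow> integrable P (\<lambda>x. (g x)\<^sup>2)"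
    using assms by (intro Bochner_Integration.integrable_cong) auto
  moreover have "prob_space.variance P f = prob_space.variance P g"
    using assms by (simp cong: Bochner_Integration.integral_cong)
  ultimately show ?thesis
    by (simp add: ext_variance_def)
qed

lemma
  fixes g :: "'b \<Rightarrow> real"
  assumes "f \<in> measurable M N" "distr M N f = N" "g \<in> borel_measurable N"
  shows integrable_distr_self_iff: "integrable M (\<lambda>x. g (f x)) \<longleftrightarrow> integrable N g"
    and integral_distr_self: "(\<integral>x. g (f x) \<partial>M) = (\<integral>x. g x \<partial>N)"
  using integrable_distr_eq[OF assms(1,3)] integral_distr[OF assms(1,3)] assms(2) by simp_all

lemma (in prob_space) distr_pair_snd:
  assumes "sigma_finite_measure N"
  shows "distr (M \<Otimes>\<^sub>M N) N snd = N"
proof (intro measure_eqI)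
  interpret N: sigma_finite_measure N by fact
  fix A assume A: "A \<in> sets (distr (M \<Otimes>\<^sub>M N) N snd)"
  then have "emeasure (distr (M \<Otimes>\<^sub>M N) N snd) A = emeasure (M \<Otimes>\<^sub>M N) (space M \<times> A)"
    by (auto simp: emeasure_distr space_pair_measure dest: sets.sets_into_space
        intro!: arg_cong2[where f=emeasure])
  with A show "emeasure (distr (M \<Otimes>\<^sub>M N) N snd) A = emeasure N A"
    by (simp add: N.emeasure_pair_measure_Times emeasure_space_1)
qed simp

lemma (in pair_sigma_finite)
  fixes u :: "'a \<Rightarrow> real" and w :: "'b \<Rightarrow> real"
  assumes u: "integrable M1 u" and w: "integrable M2 w"
  shows integrable_mult_fst_snd: "integrable (M1 \<Otimes>\<^sub>M M2) (\<lambda>z. u (fst z) * w (snd z))"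
    and integral_mult_fst_snd:
      "(\<integral>z. u (fst z) * w (snd z) \<partial>(M1 \<Otimes>\<^sub>M M2)) = (\<integral>x. u x \<partial>M1) * (\<integral>y. w y \<partial>M2)"
proof -
  have [measurable]: "u \<in> borel_measurable M1" "w \<in> borel_measurable M2"
    using u w by auto
  have "(\<integral>\<^sup>+ z. ennreal (norm (u (fst z) * w (snd z))) \<partial>(M1 \<Otimes>\<^sub>M M2))
      = (\<integral>\<^sup>+ x. \<integral>\<^sup>+ y. ennreal (norm (u x)) * ennreal (norm (w y)) \<partial>M2 \<partial>M1)"
    by (subst M2.nn_integral_fst[symmetric]) (auto simp: abs_mult ennreal_mult)
  also have "\<dots> = (\<integral>\<^sup>+ x. ennreal (norm (u x)) \<partial>M1) * (\<integral>\<^sup>+ y. ennreal (norm (w y)) \<partial>M2)"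
    by (simp add: nn_integral_cmult nn_integral_multc)
  also have "\<dots> < \<infinity>"
    using u w by (simp add: integrable_iff_bounded ennreal_mult_less_top)
  finally show int: "integrable (M1 \<Otimes>\<^sub>M M2) (\<lambda>z. u (fst z) * w (snd z))"
    by (simp add: integrable_iff_bounded)
  show "(\<integral>z. u (fst z) * w (snd z) \<partial>(M1 \<Otimes>\<^sub>M M2)) = (\<integral>x. u x \<partial>M1) * (\<integral>y. w y \<partial>M2)"
    using integral_fst'[OF int] by simp
qed

lemma variance_pair_measure_diff:
  fixes u :: "'a \<Rightarrow> real" and w :: "'b \<Rightarrow> real"
  assumes "prob_space P" "prob_space R"
    and u: "integrable P u" "integrable P (\<lambda>x. (u x)\<^sup>2)"
    and w: "integrable R w" "integrable R (\<lambda>y. (w y)\<^sup>2)"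
  shows "integrable (P \<Otimes>\<^sub>M R) (\<lambda>z. (w (snd z) - u (fst z))\<^sup>2)"
    and "prob_space.variance (P \<Otimes>\<^sub>M R) (\<lambda>z. w (snd z) - u (fst z))
         = prob_space.variance P u + prob_space.variance R w"
proof -
  interpret P: prob_space P by fact
  interpret R: prob_space R by fact
  interpret PR: pair_prob_space P R ..
  note fst_distr = R.distr_pair_fst[of P]
  note snd_distr = P.distr_pair_snd[OF R.sigma_finite_measure_axioms]
  have fst: "integrable (P \<Otimes>\<^sub>M R) (\<lambda>z. f (fst z))" "(\<integral>z. f (fst z) \<partial>(P \<Otimes>\<^sub>M R)) = (\<integral>x. f x \<partial>P)"
    if "integrable P f" for f :: "'a \<Rightarrow> real"
    using integrable_distr_self_iff[OF measurable_fst fst_distr]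
      integral_distr_self[OF measurable_fst fst_distr] that by auto
  have snd: "integrable (P \<Otimes>\<^sub>M R) (\<lambda>z. f (snd z))" "(\<integral>z. f (snd z) \<partial>(P \<Otimes>\<^sub>M R)) = (\<integral>y. f y \<partial>R)"
    if "integrable R f" for f :: "'b \<Rightarrow> real"
    using integrable_distr_self_iff[OF measurable_snd snd_distr]
      integral_distr_self[OF measurable_snd snd_distr] that by auto
  have square: "(w (snd z) - u (fst z))\<^sup>2
      = (w (snd z))\<^sup>2 + (u (fst z))\<^sup>2 - 2 * (u (fst z) * w (snd z))" for z
    by (simp add: power2_diff algebra_simps)
  show int: "integrable (P \<Otimes>\<^sub>M R) (\<lambda>z. (w (snd z) - u (fst z))\<^sup>2)"
    unfolding square using fst(1)[OF u(2)] snd(1)[OF w(2)]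
      PR.integrable_mult_fst_snd[OF u(1) w(1)] by auto
  have diff: "integrable (P \<Otimes>\<^sub>M R) (\<lambda>z. w (snd z) - u (fst z))"
    using fst(1)[OF u(1)] snd(1)[OF w(1)] by simp
  have "PR.variance (\<lambda>z. w (snd z) - u (fst z))
      = (\<integral>y. (w y)\<^sup>2 \<partial>R) + (\<integral>x. (u x)\<^sup>2 \<partial>P) - 2 * (P.expectation u * R.expectation w)
        - (R.expectation w - P.expectation u)\<^sup>2"
    unfolding PR.variance_eq[OF diff int] square
    using fst[OF u(1)] fst[OF u(2)] snd[OF w(1)] snd[OF w(2)]
      PR.integrable_mult_fst_snd[OF u(1) w(1)]
      PR.integral_mult_fst_snd[OF u(1) w(1)] by simp
  then show "PR.variance (\<lambda>z. w (snd z) - u (fst z)) = P.variance u + R.variance w"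
    using P.variance_eq[OF u] R.variance_eq[OF w] by (simp add: power2_diff algebra_simps)
qed

lemma prod_two_points:
  fixes a b :: "'i \<Rightarrow> 'b::comm_monoid_mult"
  assumes "finite I" "i \<in> I" "j \<in> I" "i \<noteq> j"
  shows "(\<Prod>k\<in>I. if k = i then a k else if k = j then b k else 1) = a i * b j"
  using assms by (simp add: prod.If_cases Int_absorb1)

lemma
  fixes g :: "'a \<Rightarrow> real"
  assumes "prob_space P" "i \<in> I" "g \<in> borel_measurable P"
  shows integrable_PiM_component_iff: "integrable (PiM I (\<lambda>_. P)) (\<lambda>X. g (X i)) \<longleftrightarrow> integrable P g"
    and integral_PiM_component: "(\<integral>X. g (X i) \<partial>PiM I (\<lambda>_. P)) = (\<integral>x. g x \<partial>P)"
  using integrable_distr_self_iff[of "\<lambda>X. X i" _ P g] integral_distr_self[of "\<lambda>X. X i" _ P g]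
    distr_PiM_component[of I "\<lambda>_. P" i] assms by simp_all

lemma
  fixes u w :: "'a \<Rightarrow> real"
  assumes "prob_space P" "finite I" "i \<in> I" "j \<in> I" "i \<noteq> j"
    and u: "integrable P u" and w: "integrable P w"
  shows integrable_PiM_mult_components: "integrable (PiM I (\<lambda>_. P)) (\<lambda>X. u (X i) * w (X j))"
    and integral_PiM_mult_components:
      "(\<integral>X. u (X i) * w (X j) \<partial>PiM I (\<lambda>_. P)) = (\<integral>x. u x \<partial>P) * (\<integral>x. w x \<partial>P)"
proof -
  interpret P: prob_space P by fact
  interpret product_sigma_finite "\<lambda>_. P"
    by (simp add: product_sigma_finite_def P.sigma_finite_measure_axioms)
  define f where "f = (\<lambda>k x. if k = i then u x else if k = j then w x else 1)"
  have "integrable P (f k)" for k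
    using u w by (cases "k = i"; cases "k = j") (simp_all add: f_def)
  moreover have "(\<Prod>k\<in>I. f k (X k)) = u (X i) * w (X j)" for X
    using assms(2-5) by (simp add: f_def prod_two_points)
  moreover have "integral\<^sup>L P (f k)
      = (if k = i then integral\<^sup>L P u else if k = j then integral\<^sup>L P w else 1)" for k
    by (simp add: f_def P.prob_space)
  then have "(\<Prod>k\<in>I. integral\<^sup>L P (f k)) = integral\<^sup>L P u * integral\<^sup>L P w"
    using assms(2-5) by (simp add: prod_two_points)
  ultimately show "integrable (PiM I (\<lambda>_. P)) (\<lambda>X. u (X i) * w (X j))"
    and "(\<integral>X. u (X i) * w (X j) \<partial>PiM I (\<lambda>_. P)) = (\<integral>x. u x \<partial>P) * (\<integral>x. w x \<partial>P)"
    using product_integrable_prod[OF \<open>finite I\<close>, of f] product_integral_prod[OF \<open>finite I\<close>, of f]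
    by simp_all
qed

definition sample_mean :: "nat \<Rightarrow> ('a \<Rightarrow> real) \<Rightarrow> (nat \<Rightarrow> 'a) \<Rightarrow> real" where
  "sample_mean n g X = (1 / real n) * (\<Sum>i<n. g (X i))"

lemma integral_PiM_component_products:
  fixes g :: "'a \<Rightarrow> real"
  assumes "prob_space P" "finite I" "i \<in> I" "j \<in> I"
    and g: "integrable P g" "integrable P (\<lambda>x. (g x)\<^sup>2)"
  shows "integrable (PiM I (\<lambda>_. P)) (\<lambda>X. g (X i) * g (X j))
    \<and> (\<integral>X. g (X i) * g (X j) \<partial>PiM I (\<lambda>_. P))
      = (\<integral>x. g x \<partial>P)\<^sup>2 + (if i = j then prob_space.variance P g else 0)"
proof (cases "i = j")
  case True
  have "g \<in> borel_measurable P"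
    using g by blast
  then show ?thesis
    using True integrable_PiM_component_iff[OF assms(1,4), of "\<lambda>x. (g x)\<^sup>2"]
      integral_PiM_component[OF assms(1,4), of "\<lambda>x. (g x)\<^sup>2"]
      prob_space.variance_eq[OF assms(1) g] g
    by (simp add: power2_eq_square)
next
  case False
  then show ?thesis
    using integrable_PiM_mult_components[OF assms(1-4) False g(1) g(1)]
      integral_PiM_mult_components[OF assms(1-4) False g(1) g(1)]
    by (simp add: power2_eq_square)
qed

lemma sample_mean_moments:
  fixes g :: "'a \<Rightarrow> real"
  assumes "prob_space P" and g: "integrable P g" "integrable P (\<lambda>x. (g x)\<^sup>2)" and "n > 0"
  shows "integrable (PiM {..<n} (\<lambda>_. P)) (sample_mean n g)"
    and "integrable (PiM {..<n} (\<lambda>_. P)) (\<lambda>X. (sample_mean n g X)\<^sup>2)"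
    and "prob_space.variance (PiM {..<n} (\<lambda>_. P)) (sample_mean n g)
      = prob_space.variance P g / real n"
proof -
  interpret P: prob_space P by fact
  interpret Q: prob_space "PiM {..<n} (\<lambda>_. P)"
    by (rule prob_space_PiM) (simp add: P.prob_space_axioms)
  define a where "a = P.expectation g"
  define v where "v = P.variance g"
  have component: "integrable (PiM {..<n} (\<lambda>_. P)) (\<lambda>X. g (X i))"
      "Q.expectation (\<lambda>X. g (X i)) = a" if "i < n" for i
    using integrable_PiM_component_iff[OF \<open>prob_space P\<close>, of i "{..<n}" g]
      integral_PiM_component[OF \<open>prob_space P\<close>, of i "{..<n}" g] that g by (auto simp: a_def)
  have products: "integrable (PiM {..<n} (\<lambda>_. P)) (\<lambda>X. g (X i) * g (X j))
      \<and> Q.expectation (\<lambda>X. g (X i) * g (X j)) = a\<^sup>2 + (if i = j then v else 0)"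
    if "i < n" "j < n" for i j
    using integral_PiM_component_products[OF \<open>prob_space P\<close> _ _ _ g, of "{..<n}" i j] that
    by (simp add: a_def v_def)
  have square: "(sample_mean n g X)\<^sup>2 = (1 / real n)\<^sup>2 * (\<Sum>i<n. \<Sum>j<n. g (X i) * g (X j))" for X
    by (simp add: sample_mean_def power_mult_distrib power2_eq_square sum_product)
  show int: "integrable (PiM {..<n} (\<lambda>_. P)) (sample_mean n g)"
    unfolding sample_mean_def using component
    by (intro integrable_mult_right Bochner_Integration.integrable_sum) auto
  show int2: "integrable (PiM {..<n} (\<lambda>_. P)) (\<lambda>X. (sample_mean n g X)\<^sup>2)"
    unfolding square using products
    by (intro integrable_mult_right Bochner_Integration.integrable_sum) auto
  have "Q.expectation (sample_mean n g) = a"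
    unfolding sample_mean_def using component \<open>n > 0\<close> by
      (simp add: Bochner_Integration.integral_sum)
  moreover have "Q.expectation (\<lambda>X. (sample_mean n g X)\<^sup>2) = a\<^sup>2 + v / real n"
  proof -
    have "Q.expectation (\<lambda>X. \<Sum>i<n. \<Sum>j<n. g (X i) * g (X j))
        = (\<Sum>i<n. \<Sum>j<n. Q.expectation (\<lambda>X. g (X i) * g (X j)))"
    proof (subst Bochner_Integration.integral_sum)
      show "integrable (PiM {..<n} (\<lambda>_. P)) (\<lambda>X. \<Sum>j<n. g (X i) * g (X j))" if "i \<in> {..<n}" for i
        using products that by (intro Bochner_Integration.integrable_sum) auto
      show "(\<Sum>i<n. Q.expectation (\<lambda>X. \<Sum>j<n. g (X i) * g (X j)))
          = (\<Sum>i<n. \<Sum>j<n. Q.expectation (\<lambda>X. g (X i) * g (X j)))"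
        using products by (intro sum.cong refl Bochner_Integration.integral_sum) auto
    qed
    also have "\<dots> = (\<Sum>i<n. \<Sum>j<n. a\<^sup>2 + (if i = j then v else 0))"
      using products by (intro sum.cong refl) auto
    also have "\<dots> = (real n)\<^sup>2 * a\<^sup>2 + real n * v"
      by (simp add: sum.distrib power2_eq_square algebra_simps)
    finally show ?thesis
      unfolding square using \<open>n > 0\<close> by (simp add: power2_eq_square field_simps)
  qed
  ultimately show "Q.variance (sample_mean n g) = P.variance g / real n"
    using Q.variance_eq[OF int int2] by (simp add: v_def)
qed

lemma integrable_square_of_sample_mean:
  fixes g :: "'a \<Rightarrow> real"
  assumes "prob_space P" "g \<in> borel_measurable P" "\<And>x. x \<in> space P \<Longrightarrow> 0 \<le> g x" "n > 0"
    and int: "integrable (PiM {..<n} (\<lambda>_. P)) (\<lambda>X. (sample_mean n g X)\<^sup>2)"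
  shows "integrable P (\<lambda>x. (g x)\<^sup>2)"
proof -
  have "integrable (PiM {..<n} (\<lambda>_. P)) (\<lambda>X. (g (X 0))\<^sup>2)"
  proof (rule Bochner_Integration.integrable_bound)
    show "integrable (PiM {..<n} (\<lambda>_. P)) (\<lambda>X. (real n)\<^sup>2 * (sample_mean n g X)\<^sup>2)"
      using int by simp
    show "(\<lambda>X. (g (X 0))\<^sup>2) \<in> borel_measurable (PiM {..<n} (\<lambda>_. P))"
      using assms(2,4) by (intro measurable_compose[OF _ borel_measurable_power]) auto
    have "(g (X 0))\<^sup>2 \<le> (real n * sample_mean n g X)\<^sup>2" if "X \<in> space (PiM {..<n} (\<lambda>_. P))" for X
    proof -
      have X: "X i \<in> space P" if "i < n" for i
        using \<open>X \<in> space _\<close> that by (auto simp: space_PiM)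
      have "g (X 0) \<le> (\<Sum>i<n. g (X i))"
        using assms(3) X \<open>n > 0\<close> by (intro member_le_sum) auto
      then show ?thesis
        using assms(3) X \<open>n > 0\<close> by (intro power_mono) (auto simp: sample_mean_def)
    qed
    then show "AE X in PiM {..<n} (\<lambda>_. P).
        norm ((g (X 0))\<^sup>2) \<le> norm ((real n)\<^sup>2 * (sample_mean n g X)\<^sup>2)"
      by (intro AE_I2) (simp add: power_mult_distrib)
  qed
  then show ?thesis
    using integrable_PiM_component_iff[OF assms(1), of 0 "{..<n}" "\<lambda>x. (g x)\<^sup>2"] assms(2,4) by simp
qed

lemma ext_variance_sample_mean_minus:
  fixes g :: "'a \<Rightarrow> real"
  assumes "prob_space P" "integrable P g" "\<And>x. x \<in> space P \<Longrightarrow> 0 \<le> g x" "n > 0"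
  shows "ext_variance (PiM {..<n} (\<lambda>_. P)) (\<lambda>X. sample_mean n g X - c)
    = (if integrable P (\<lambda>x. (g x)\<^sup>2) then ennreal (prob_space.variance P g / real n) else \<infinity>)"
proof -
  interpret Q: prob_space "PiM {..<n} (\<lambda>_. P)"
    by (rule prob_space_PiM) (simp add: assms(1))
  have mean: "integrable (PiM {..<n} (\<lambda>_. P)) (sample_mean n g)"
    unfolding sample_mean_def using integrable_PiM_component_iff[OF assms(1), of _ "{..<n}" g]
      assms(2)
    by (intro integrable_mult_right Bochner_Integration.integrable_sum) auto
  have shift: "(sample_mean n g X - c)\<^sup>2
      = (sample_mean n g X)\<^sup>2 - 2 * c * sample_mean n g X + c\<^sup>2" for X
    by (simp add: power2_diff)
  have "integrable (PiM {..<n} (\<lambda>_. P)) (\<lambda>X. (sample_mean n g X - c)\<^sup>2)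
      \<longleftrightarrow> integrable (PiM {..<n} (\<lambda>_. P)) (\<lambda>X. (sample_mean n g X)\<^sup>2)"
  proof
    assume "integrable (PiM {..<n} (\<lambda>_. P)) (\<lambda>X. (sample_mean n g X - c)\<^sup>2)"
    moreover have "(sample_mean n g X)\<^sup>2
        = (sample_mean n g X - c)\<^sup>2 + 2 * c * sample_mean n g X - c\<^sup>2" for X
      by (simp add: power2_diff)
    ultimately show "integrable (PiM {..<n} (\<lambda>_. P)) (\<lambda>X. (sample_mean n g X)\<^sup>2)"
      using mean by simp
  qed (use mean in \<open>simp add: shift\<close>)
  moreover have "Q.variance (\<lambda>X. sample_mean n g X - c) = Q.variance (sample_mean n g)"
    using mean by (simp add: Q.prob_space)
  ultimately show ?thesis
    unfolding ext_variance_def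
    using sample_mean_moments[OF assms(1,2) _ assms(4)]
      integrable_square_of_sample_mean[OF assms(1) _ assms(3,4)] assms(2)
    by auto
qed

lemma ext_variance_two_sample_mean_diff:
  fixes u :: "'a \<Rightarrow> real" and w :: "'b \<Rightarrow> real"
  assumes "prob_space P" "prob_space R"
    and u: "integrable P u" "integrable P (\<lambda>x. (u x)\<^sup>2)"
    and w: "integrable R w" "integrable R (\<lambda>y. (w y)\<^sup>2)"
    and "m > 0" "n > 0"
  shows "ext_variance (PiM {..<m} (\<lambda>_. P) \<Otimes>\<^sub>M PiM {..<n} (\<lambda>_. R))
      (\<lambda>(X, Y). sample_mean n w Y - sample_mean m u X)
    = ennreal (prob_space.variance P u / real m + prob_space.variance R w / real n)"
proof -
  have "prob_space (PiM {..<m} (\<lambda>_. P))" "prob_space (PiM {..<n} (\<lambda>_. R))"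
    using assms(1,2) by (auto intro: prob_space_PiM)
  note pair = variance_pair_measure_diff[OF this
      sample_mean_moments(1,2)[OF assms(1) u \<open>m > 0\<close>]
      sample_mean_moments(1,2)[OF assms(2) w \<open>n > 0\<close>]]
  show ?thesis
    using pair sample_mean_moments(3)[OF assms(1) u \<open>m > 0\<close>]
      sample_mean_moments(3)[OF assms(2) w \<open>n > 0\<close>]
    by (simp add: ext_variance_def case_prod_beta')
qed

lemma
  fixes f h :: "'a \<Rightarrow> real"
  assumes [measurable]: "p \<in> borel_measurable M" "f \<in> borel_measurable M"
    and "\<And>x. x \<in> space M \<Longrightarrow> 0 \<le> p x"
    and eq: "AE x in M. p x * f x = h x" and h: "integrable M h"
  shows integrable_density_AE_eq: "integrable (density M (\<lambda>x. ennreal (p x))) f"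
    and integral_density_AE_eq: "(\<integral>x. f x \<partial>density M (\<lambda>x. ennreal (p x))) = (\<integral>x. h x \<partial>M)"
proof -
  have "AE x in M. 0 \<le> p x"
    using assms(3) by simp
  have [measurable]: "h \<in> borel_measurable M"
    using h by blast
  show "integrable (density M (\<lambda>x. ennreal (p x))) f"
    using integrable_cong_AE[OF _ _ eq] h \<open>AE x in M. 0 \<le> p x\<close> by (simp add: integrable_density)
  show "(\<integral>x. f x \<partial>density M (\<lambda>x. ennreal (p x))) = (\<integral>x. h x \<partial>M)"
    using integral_cong_AE[OF _ _ eq] \<open>AE x in M. 0 \<le> p x\<close> by (simp add: integral_density)
qed

lemma
  assumes "prob_density M p"
  shows prob_space_prob_density: "prob_space (density M (\<lambda>x. ennreal (p x)))"
    and integrable_prob_density: "integrable M p"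
    and integral_prob_density: "(\<integral>x. p x \<partial>M) = 1"
proof -
  have [measurable]: "p \<in> borel_measurable M" and nonneg: "\<And>x. x \<in> space M \<Longrightarrow> 0 \<le> p x"
    and one: "(\<integral>\<^sup>+ x. ennreal (p x) \<partial>M) = 1"
    using assms by (auto simp: prob_density_def)
  show "prob_space (density M (\<lambda>x. ennreal (p x)))"
  proof (rule prob_spaceI)
    have "emeasure (density M (\<lambda>x. ennreal (p x))) (space M) = (\<integral>\<^sup>+ x. ennreal (p x) \<partial>M)"
      by (subst emeasure_density) (auto intro!: nn_integral_cong)
    then show "emeasure (density M (\<lambda>x. ennreal (p x))) (space (density M (\<lambda>x. ennreal (p x)))) = 1"
      using one by simp
  qed
  show int: "integrable M p"
    using nonneg one by (intro integrableI_nonneg) auto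
  have "ennreal (\<integral>x. p x \<partial>M) = 1"
    using nn_integral_eq_integral[OF int] nonneg one by simp
  then show "(\<integral>x. p x \<partial>M) = 1"
    using nonneg by (simp add: ennreal_eq_1 integral_nonneg)
qed

lemma Pac_commute: "(p1, p2) \<in> Pac M \<Longrightarrow> (p2, p1) \<in> Pac M"
  by (auto simp: Pac_def elim: AE_mp)

lemma bhatt_commute: "bhatt M p1 p2 = bhatt M p2 p1"
  by (simp add: bhatt_def mult.commute)

lemma
  assumes "prob_density M p1" "prob_density M p2"
  shows integrable_sqrt_lik_ratio:
      "integrable (density M (\<lambda>x. ennreal (p2 x))) (\<lambda>x. sqrt (lik_ratio p1 p2 x))"
    and integral_sqrt_lik_ratio:
      "(\<integral>x. sqrt (lik_ratio p1 p2 x) \<partial>density M (\<lambda>x. ennreal (p2 x))) = bhatt M p1 p2"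
proof -
  have [measurable]: "p1 \<in> borel_measurable M" "p2 \<in> borel_measurable M"
    and nonneg: "\<And>x. x \<in> space M \<Longrightarrow> 0 \<le> p1 x" "\<And>x. x \<in> space M \<Longrightarrow> 0 \<le> p2 x"
    using assms by (auto simp: prob_density_def)
  have "integrable M (\<lambda>x. sqrt (p1 x * p2 x))"
  proof (rule Bochner_Integration.integrable_bound)
    show "integrable M (\<lambda>x. p1 x + p2 x)"
      using integrable_prob_density[OF assms(1)] integrable_prob_density[OF assms(2)] by simp
    show "AE x in M. norm (sqrt (p1 x * p2 x)) \<le> norm (p1 x + p2 x)"
      using nonneg arith_geo_mean_sqrt[of "p1 _" "p2 _"] by (intro AE_I2) force
  qed simp
  moreover have "AE x in M. p2 x * sqrt (lik_ratio p1 p2 x) = sqrt (p1 x * p2 x)"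
    using nonneg by (intro AE_I2) (simp add: lik_ratio_def mult_sqrt_divide)
  ultimately show "integrable (density M (\<lambda>x. ennreal (p2 x))) (\<lambda>x. sqrt (lik_ratio p1 p2 x))"
    and "(\<integral>x. sqrt (lik_ratio p1 p2 x) \<partial>density M (\<lambda>x. ennreal (p2 x))) = bhatt M p1 p2"
    using nonneg by (auto simp: bhatt_def lik_ratio_def
        intro!: integrable_density_AE_eq integral_density_AE_eq)
qed

lemma
  assumes "(p1, p2) \<in> Pac M"
  shows integrable_lik_ratio: "integrable (density M (\<lambda>x. ennreal (p2 x))) (lik_ratio p1 p2)"
    and integral_lik_ratio: "(\<integral>x. lik_ratio p1 p2 x \<partial>density M (\<lambda>x. ennreal (p2 x))) = 1"
proof -
  have p1: "prob_density M p1" and p2: "prob_density M p2"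
    and ac: "AE x in M. p1 x = 0 \<longleftrightarrow> p2 x = 0"
    using assms by (auto simp: Pac_def)
  then have [measurable]: "p1 \<in> borel_measurable M" "p2 \<in> borel_measurable M"
    and nonneg: "\<And>x. x \<in> space M \<Longrightarrow> 0 \<le> p2 x"
    by (auto simp: prob_density_def)
  have [measurable]: "lik_ratio p1 p2 \<in> borel_measurable M"
    unfolding lik_ratio_def by simp
  have eq: "AE x in M. p2 x * lik_ratio p1 p2 x = p1 x"
    using ac by eventually_elim (auto simp: lik_ratio_def)
  show "integrable (density M (\<lambda>x. ennreal (p2 x))) (lik_ratio p1 p2)"
    by (rule integrable_density_AE_eq[OF _ _ nonneg eq integrable_prob_density[OF p1]]) simp_all
  show "(\<integral>x. lik_ratio p1 p2 x \<partial>density M (\<lambda>x. ennreal (p2 x))) = 1"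
    using integral_density_AE_eq[OF _ _ nonneg eq integrable_prob_density[OF p1]]
      integral_prob_density[OF p1] by simp
qed

lemma variance_sqrt_lik_ratio:
  assumes "(p1, p2) \<in> Pac M"
  defines "P2 \<equiv> density M (\<lambda>x. ennreal (p2 x))"
  shows "integrable P2 (\<lambda>x. sqrt (lik_ratio p1 p2 x))"
    and "integrable P2 (\<lambda>x. (sqrt (lik_ratio p1 p2 x))\<^sup>2)"
    and "prob_space.variance P2 (\<lambda>x. sqrt (lik_ratio p1 p2 x)) = 1 - (bhatt M p1 p2)\<^sup>2"
proof -
  have p1: "prob_density M p1" and p2: "prob_density M p2"
    using assms by (auto simp: Pac_def)
  interpret P2: prob_space P2
    unfolding P2_def by (rule prob_space_prob_density[OF p2])
  have square: "(sqrt (lik_ratio p1 p2 x))\<^sup>2 = lik_ratio p1 p2 x" if "x \<in> space P2" for x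
    using p1 p2 that by (simp add: P2_def prob_density_def lik_ratio_def)
  show int: "integrable P2 (\<lambda>x. sqrt (lik_ratio p1 p2 x))"
    unfolding P2_def by (rule integrable_sqrt_lik_ratio[OF p1 p2])
  show int2: "integrable P2 (\<lambda>x. (sqrt (lik_ratio p1 p2 x))\<^sup>2)"
    using integrable_lik_ratio[OF assms(1)]
    by (subst Bochner_Integration.integrable_cong[OF refl square]) (simp_all add: P2_def)
  have "P2.expectation (\<lambda>x. (sqrt (lik_ratio p1 p2 x))\<^sup>2) = P2.expectation (lik_ratio p1 p2)"
    by (rule Bochner_Integration.integral_cong[OF refl square])
  also have "\<dots> = 1"
    unfolding P2_def by (rule integral_lik_ratio[OF assms(1)])
  finally have "P2.expectation (\<lambda>x. (sqrt (lik_ratio p1 p2 x))\<^sup>2) = 1" .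
  then show "P2.variance (\<lambda>x. sqrt (lik_ratio p1 p2 x)) = 1 - (bhatt M p1 p2)\<^sup>2"
    using P2.variance_eq[OF int int2] integral_sqrt_lik_ratio[OF p1 p2] by (simp add: P2_def)
qed

lemma V2_eq_ext_variance_sqrt_lik_ratio:
  assumes p1: "prob_density M p1" and p2: "prob_density M p2"
  shows "V2 M p1 p2 m n = ext_variance (iid_sample M p1 m \<Otimes>\<^sub>M iid_sample M p2 n)
      (\<lambda>(X, Y). sample_mean n (\<lambda>x. sqrt (lik_ratio p1 p2 x)) Y
        - sample_mean m (\<lambda>x. sqrt (lik_ratio p2 p1 x)) X)"
  unfolding V2_def
proof (rule ext_variance_cong, clarify)
  have half: "lik_ratio p1 p2 x powr (1/2) = sqrt (lik_ratio p1 p2 x)"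
    and neg_half: "lik_ratio p1 p2 x powr (-1/2) = sqrt (lik_ratio p2 p1 x)" if "x \<in> space M" for x
    using p1 p2 that powr_neg_half_divide[of "p1 x" "p2 x"]
    by (simp_all add: prob_density_def lik_ratio_def powr_half_sqrt)
  fix X Y assume XY: "(X, Y) \<in> space (iid_sample M p1 m \<Otimes>\<^sub>M iid_sample M p2 n)"
  have X: "X i \<in> space M" if "i < m" for i
    using XY that by (auto simp: space_pair_measure space_PiM iid_sample_def)
  have Y: "Y i \<in> space M" if "i < n" for i
    using XY that by (auto simp: space_pair_measure space_PiM iid_sample_def)
  have "(\<Sum>i<n. lik_ratio p1 p2 (Y i) powr (1/2)) = (\<Sum>i<n. sqrt (lik_ratio p1 p2 (Y i)))"
    using Y by (intro sum.cong refl half) auto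
  moreover have "(\<Sum>i<m. lik_ratio p1 p2 (X i) powr (-1/2)) = (\<Sum>i<m. sqrt (lik_ratio p2 p1 (X i)))"
    using X by (intro sum.cong refl neg_half) auto
  ultimately show "1 / real n * (\<Sum>i<n. lik_ratio p1 p2 (Y i) powr (1/2))
      - 1 / real m * (\<Sum>i<m. lik_ratio p1 p2 (X i) powr (-1/2))
    = sample_mean n (\<lambda>x. sqrt (lik_ratio p1 p2 x)) Y
      - sample_mean m (\<lambda>x. sqrt (lik_ratio p2 p1 x)) X"
    by (simp only: sample_mean_def)
qed

lemma V2_eq:
  assumes Pac: "(p1, p2) \<in> Pac M" and "m > 0" "n > 0"
  shows "V2 M p1 p2 m n
    = ennreal ((1 - (bhatt M p1 p2)\<^sup>2) / real m + (1 - (bhatt M p1 p2)\<^sup>2) / real n)"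
proof -
  have p1: "prob_density M p1" and p2: "prob_density M p2"
    using Pac by (auto simp: Pac_def)
  note first = variance_sqrt_lik_ratio[OF Pac_commute[OF Pac]]
  note second = variance_sqrt_lik_ratio[OF Pac]
  show ?thesis
    using ext_variance_two_sample_mean_diff[OF prob_space_prob_density[OF p1]
        prob_space_prob_density[OF p2] first(1,2) second(1,2) \<open>m > 0\<close> \<open>n > 0\<close>]
    unfolding V2_eq_ext_variance_sqrt_lik_ratio[OF p1 p2] iid_sample_def first(3) second(3)
      bhatt_commute[of M p2 p1] .
qed

lemma V2_bal_eq:
  assumes "(p1, p2) \<in> Pac M" and "even N" "N > 0"
  shows "V2_bal M p1 p2 N = ennreal (4 * (1 - (bhatt M p1 p2)\<^sup>2) / real N)"
proof -
  have "N div 2 > 0" "real N = 2 * real (N div 2)"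
    using assms(2,3) by (auto elim: evenE)
  then show ?thesis
    unfolding V2_bal_def V2_eq[OF assms(1) \<open>N div 2 > 0\<close> \<open>N div 2 > 0\<close>]
    by (intro arg_cong[where f = ennreal]) (simp add: field_simps)
qed

lemma V1_lower_bound:
  assumes Pac: "(p1, p2) \<in> Pac M" and "N > 0" and "bhatt M p1 p2 \<le> 1/2"
  shows "ennreal (4 * (1 - (bhatt M p1 p2)\<^sup>2) / real N) \<le> V1 M p1 p2 N"
proof -
  define P2 where "P2 = density M (\<lambda>x. ennreal (p2 x))"
  define B where "B = lik_ratio p1 p2"
  have p1: "prob_density M p1" and p2: "prob_density M p2"
    using Pac by (auto simp: Pac_def)
  interpret P2: prob_space P2
    unfolding P2_def by (rule prob_space_prob_density[OF p2])
  have nonneg: "0 \<le> B x" if "x \<in> space P2" for x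
    using p1 p2 that by (simp add: P2_def B_def lik_ratio_def prob_density_def)
  have B: "integrable P2 B" "P2.expectation B = 1"
    unfolding P2_def B_def using integrable_lik_ratio[OF Pac] integral_lik_ratio[OF Pac] by simp_all
  have "V1 M p1 p2 N = ext_variance (PiM {..<N} (\<lambda>_. P2)) (\<lambda>X. sample_mean N B X - 1)"
    unfolding V1_def iid_sample_def sample_mean_def P2_def B_def ..
  also have "\<dots> = (if integrable P2 (\<lambda>x. (B x)\<^sup>2) then ennreal (P2.variance B / real N) else \<infinity>)"
    by (rule ext_variance_sample_mean_minus[OF P2.prob_space_axioms B(1) nonneg \<open>N > 0\<close>])
  finally have V1: "V1 M p1 p2 N = \<dots>" .
  show ?thesis
  proof (cases "integrable P2 (\<lambda>x. (B x)\<^sup>2)")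
    case True
    have "P2.expectation (\<lambda>x. sqrt (B x)) = bhatt M p1 p2"
      unfolding P2_def B_def by (rule integral_sqrt_lik_ratio[OF p1 p2])
    moreover have "0 \<le> P2.expectation (\<lambda>x. sqrt (B x))"
      using nonneg by (simp add: integral_nonneg)
    ultimately have "4 * (1 - (bhatt M p1 p2)\<^sup>2) \<le> P2.expectation (\<lambda>x. (B x)\<^sup>2) - 1"
      using P2.expectation_cube_le[OF nonneg B(1) True] B(2) \<open>bhatt M p1 p2 \<le> 1/2\<close>
      by (intro four_mult_one_minus_square_le) simp_all
    also have "\<dots> = P2.variance B"
      using P2.variance_eq[OF B(1) True] B(2) by simp
    finally show ?thesis
      using V1 True \<open>N > 0\<close> by (simp add: ennreal_leI divide_right_mono)
  qed (simp add: V1)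
qed

theorem theorem3:
  fixes M :: "'a measure" and p1 p2 :: "'a \<Rightarrow> real" and N :: nat
  assumes "sigma_finite_measure M"
    and "(p1, p2) \<in> Pac M"
    and "even N" and "N > 0"
  shows "V2_bal M p1 p2 N = ennreal (4 * (1 - (bhatt M p1 p2)\<^sup>2) / real N)
         \<and> (SUP q \<in> Pac M. V2_bal M (fst q) (snd q) N) \<le> ennreal (4 / real N)
         \<and> (SUP q \<in> Pac M. V2_bal M (fst q) (snd q) N) < \<infinity>
         \<and> (bhatt M p1 p2 \<le> 1/2 \<longrightarrow> V2_bal M p1 p2 N \<le> V1 M p1 p2 N)"
proof -
  have sup: "(SUP q \<in> Pac M. V2_bal M (fst q) (snd q) N) \<le> ennreal (4 / real N)"
  proof (rule SUP_least)
    fix q assume "q \<in> Pac M"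
    then have "V2_bal M (fst q) (snd q) N
        = ennreal (4 * (1 - (bhatt M (fst q) (snd q))\<^sup>2) / real N)"
      using V2_bal_eq[of "fst q" "snd q"] assms(3,4) by simp
    also have "\<dots> \<le> ennreal (4 / real N)"
      using assms(4) by (intro ennreal_leI divide_right_mono) auto
    finally show "V2_bal M (fst q) (snd q) N \<le> ennreal (4 / real N)" .
  qed
  then have "(SUP q \<in> Pac M. V2_bal M (fst q) (snd q) N) < \<infinity>"
    by (rule le_less_trans) simp
  with sup show ?thesis
    using V2_bal_eq[OF assms(2-4)] V1_lower_bound[OF assms(2,4)] by simp
qed

end
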